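(* Let $q=p^r$ with $p$ prime, $p\ne 2$, $p\ne 3$. Let $$f_2(x_1,x_2)=t\bigl(x_1^{q-2}+x_2^{q-2}\bigr).$$ Then the polynomial $t\bigl(f_2(x_1,x_2)+x_3^{q-2}\bigr)\in\mathbb{F}_q[x_1,x_2,x_3]$, reduced modulo $x_j^q-x_j$, has degree $3(q-2)$.
   Context: $\mathbb{F}_q$ is the finite field with $q$ elements, and $$t(x)=x+\sum_{k=0}^{q-2}x^k\in\mathbb{F}_q[x];$$ this polynomial swaps $0$ and $1$ and fixes every other element. Degree means the total degree of the reduced representative (degree $<q$ in each variable). *)

theory Defs
  imports "HOL-Computational_Algebra.Primes" "HOL-Library.Cardinality"
begin

text \<open>The polynomial t(x) = x + sum_{k=0}^{q-2} x^k over the finite field with q = CARD('a)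
  elements, viewed through its evaluation (a polynomial composed with polynomials evaluates
  pointwise by composition).\<close>
definition tfun :: "'a::{finite,field} \<Rightarrow> 'a" where
  "tfun x = x + (\<Sum>k \<in> {0..CARD('a) - 2}. x ^ k)"

text \<open>Polynomials in three variables x1,x2,x3 over 'a, given by their coefficient function on
  exponent triples. A polynomial is reduced (modulo x_j^q - x_j) if every exponent is < q.\<close>
definition reduced3 :: "(nat \<times> nat \<times> nat \<Rightarrow> 'a::{finite,field}) \<Rightarrow> bool" where
  "reduced3 c \<longleftrightarrow> (\<forall>a b d. c (a, b, d) \<noteq> 0 \<longrightarrow> a < CARD('a) \<and> b < CARD('a) \<and> d < CARD('a))"

definition eval3 :: "(nat \<times> nat \<times> nat \<Rightarrow> 'a::{finite,field}) \<Rightarrow> 'a \<Rightarrow> 'a \<Rightarrow> 'a \<Rightarrow> 'a" where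
  "eval3 c x1 x2 x3 =
     (\<Sum>(a, b, d) \<in> {0..<CARD('a)} \<times> {0..<CARD('a)} \<times> {0..<CARD('a)}.
        c (a, b, d) * x1 ^ a * x2 ^ b * x3 ^ d)"

text \<open>Total degree of a (reduced, hence finitely supported) polynomial.\<close>
definition totdeg3 :: "(nat \<times> nat \<times> nat \<Rightarrow> 'a::zero) \<Rightarrow> nat" where
  "totdeg3 c = Max {a + b + d | a b d. c (a, b, d) \<noteq> 0}"

end

theory Submission
  imports Defs "HOL-Number_Theory.Residues" "HOL-Computational_Algebra.Polynomial"
begin

text \<open>Since \<open>x ^ (q - 2) = inverse x\<close> on \<open>F_q\<close>, the function \<open>f3\<close> is
  \<open>t (t (1/x1 + 1/x2) + 1/x3)\<close>. The power sum \<open>\<Sum>x. x ^ k\<close> is \<open>-1\<close> when \<open>k\<close> is a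
  positive multiple of \<open>q - 1\<close> and \<open>0\<close> otherwise, so for \<open>1 <= a, b, d <= q - 1\<close> the
  coefficient of \<open>x1^a x2^b x3^d\<close> in the reduced polynomial is
  \<open>- \<Sum>x. f3 x * x1^e1 * x2^e2 * x3^e3\<close> with \<open>(e1, e2, e3) = (q-1-a, q-1-b, q-1-d)\<close>,
  and monomials of degree above \<open>3 (q - 2)\<close> have \<open>e1 + e2 + e3 <= 2\<close>. Substituting
  \<open>u = 1/x\<close> and writing \<open>t y = y + [y = 0] - [y = 1]\<close>, the sum over \<open>u3\<close> reduces to the
  two points where \<open>t\<close> moves its argument. If some exponent is \<open>0\<close>, the remaining double
  sum vanishes by translation invariance, while for \<open>e = (1, 1, 1)\<close> partial fractions give
  \<open>-6\<close>. As \<open>p > 3\<close>, \<open>6 \<noteq> 0\<close>, so \<open>(x1 x2 x3)^(q-2)\<close> occurs and no monomial of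
  higher degree does.\<close>

section \<open>Power sums over a finite field\<close>

lemma card_field_ge_2: "CARD('a::{finite,field}) \<ge> 2"
proof -
  have "card {0::'a, 1} \<le> CARD('a)"
    by (rule card_mono) auto
  then show ?thesis
    by simp
qed

lemma of_nat_card_field: "of_nat CARD('a::{finite,field}) = (0::'a)"
  by (simp add: of_nat_eq_0_iff_char_dvd CHAR_dvd_CARD)

lemma power_card_minus_1:
  fixes x :: "'a::{finite,field}"
  assumes "x \<noteq> 0"
  shows "x ^ (CARD('a) - 1) = 1"
proof -
  let ?N = "UNIV - {0::'a}"
  have "(\<Prod>y\<in>?N. x * y) = (\<Prod>y\<in>?N. y)"
    by (rule prod.reindex_bij_witness[of _ "\<lambda>y. inverse x * y" "\<lambda>y. x * y"]) (use assms in auto)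
  moreover have "(\<Prod>y\<in>?N. x * y) = x ^ card ?N * (\<Prod>y\<in>?N. y)"
    by (simp add: prod.distrib)
  moreover have "(\<Prod>y\<in>?N. y) \<noteq> 0"
    by simp
  moreover have "card ?N = CARD('a) - 1"
    by (simp add: card_Diff_subset)
  ultimately show ?thesis
    by simp
qed

lemma power_mod_card_minus_1:
  fixes x :: "'a::{finite,field}"
  assumes "x \<noteq> 0"
  shows "x ^ k = x ^ (k mod (CARD('a) - 1))"
proof -
  have "x ^ k = (x ^ (CARD('a) - 1)) ^ (k div (CARD('a) - 1)) * x ^ (k mod (CARD('a) - 1))"
    by (simp flip: power_mult power_add)
  then show ?thesis
    using power_card_minus_1[OF assms] by simp
qed

lemma power_card_minus_2:
  fixes x :: "'a::{finite,field}"
  assumes "CARD('a) \<ge> 3"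
  shows "x ^ (CARD('a) - 2) = inverse x"
proof (cases "x = 0")
  case False
  have "x ^ (CARD('a) - 2) * x = x ^ (CARD('a) - 1)"
    using assms by (simp flip: power_Suc2 add: Suc_diff_Suc numeral_2_eq_2)
  then show ?thesis
    using power_card_minus_1[OF False] False by (simp add: field_simps)
qed (use assms in simp)

lemma card_roots_of_unity_le:
  assumes "n > 0"
  shows "card {z::'a::idom. z ^ n = 1} \<le> n"
proof -
  let ?p = "monom (1::'a) n - 1"
  have "coeff ?p n = 1"
    using assms unfolding coeff_diff by simp
  then have "?p \<noteq> 0"
    by (metis coeff_0 zero_neq_one)
  moreover have "degree ?p \<le> n"
    by (intro degree_diff_le) (auto simp: degree_monom_le)
  moreover have "{z. poly ?p z = 0} = {z. z ^ n = 1}"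
    by (simp add: poly_monom)
  ultimately show ?thesis
    using card_poly_roots_bound[of ?p] by simp
qed

lemma ex_power_neq_1:
  assumes "\<not> (CARD('a::{finite,field}) - 1) dvd k"
  shows "\<exists>a::'a. a \<noteq> 0 \<and> a ^ k \<noteq> 1"
proof (rule ccontr)
  define m where "m = k mod (CARD('a) - 1)"
  have m: "0 < m" "m < CARD('a) - 1"
    using assms card_field_ge_2[where 'a='a] by (auto simp: m_def dvd_eq_mod_eq_0)
  assume "\<not> ?thesis"
  then have "UNIV - {0} \<subseteq> {z::'a. z ^ m = 1}"
    using power_mod_card_minus_1[where 'a='a and k=k] by (auto simp: m_def)
  then have "card (UNIV - {0::'a}) \<le> m"
    using card_roots_of_unity_le[OF m(1), where 'a='a] by (meson card_mono finite le_trans)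
  then show False
    using m(2) by (simp add: card_Diff_subset)
qed

lemma sum_power_finite_field:
  "(\<Sum>x\<in>UNIV. (x::'a::{finite,field}) ^ k) = (if 0 < k \<and> (CARD('a) - 1) dvd k then -1 else 0)"
proof (cases "(CARD('a) - 1) dvd k")
  case False
  then obtain a :: 'a where a: "a \<noteq> 0" "a ^ k \<noteq> 1"
    using ex_power_neq_1 by blast
  have "(\<Sum>x\<in>UNIV. (a * x) ^ k) = (\<Sum>x\<in>UNIV. x ^ k)"
    by (rule sum.reindex_bij_witness[of _ "\<lambda>y. inverse a * y" "\<lambda>y. a * y"]) (use a in auto)
  then have "a ^ k * (\<Sum>x\<in>UNIV. x ^ k) = (\<Sum>x\<in>UNIV. x ^ k)"
    by (simp add: power_mult_distrib sum_distrib_left)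
  then have "(a ^ k - 1) * (\<Sum>x\<in>UNIV. x ^ k) = 0"
    by (simp add: left_diff_distrib)
  then show ?thesis
    using a(2) False by simp
next
  case True
  show ?thesis
  proof (cases "k = 0")
    case True
    then show ?thesis
      using of_nat_card_field[where 'a='a] by simp
  next
    case False
    have power_eq_1: "x ^ k = 1" if "x \<noteq> 0" for x :: 'a
      using power_mod_card_minus_1[OF that, of k] \<open>(CARD('a) - 1) dvd k\<close> by simp
    have "(\<Sum>x\<in>UNIV. x ^ k) = 0 ^ k + (\<Sum>x\<in>UNIV - {0::'a}. x ^ k)"
      by (rule sum.remove) simp_all
    also have "\<dots> = (\<Sum>x\<in>UNIV - {0::'a}. 1)"
      using False by (simp add: power_eq_1 cong: sum.cong_simp)
    also have "\<dots> = of_nat (card (UNIV - {0::'a}))"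
      by simp
    also have "\<dots> = of_nat CARD('a) - 1"
      using card_field_ge_2[where 'a='a] by (simp add: card_Diff_subset of_nat_diff)
    also have "\<dots> = -1"
      by (simp add: of_nat_card_field)
    finally show ?thesis
      using \<open>(CARD('a) - 1) dvd k\<close> False by simp
  qed
qed

lemma sum_UNIV_inverse: "(\<Sum>x\<in>UNIV. f (inverse x)) = (\<Sum>x\<in>UNIV. f (x::'a::division_ring))"
  by (rule sum.reindex_bij_witness[of _ inverse inverse]) auto

lemma sum_UNIV_add: "(\<Sum>x\<in>UNIV. f (a + x)) = (\<Sum>x\<in>UNIV. f (x::'a::ab_group_add))"
  by (rule sum.reindex_bij_witness[of _ "\<lambda>y. y - a" "\<lambda>y. a + y"]) auto

lemma sum_UNIV_diff: "(\<Sum>x\<in>UNIV. f (a - x)) = (\<Sum>x\<in>UNIV. f (x::'a::ab_group_add))"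
  by (rule sum.reindex_bij_witness[of _ "\<lambda>y. a - y" "\<lambda>y. a - y"]) auto

lemma sum_inverse_power:
  assumes "k < CARD('a::{finite,field}) - 1"
  shows "(\<Sum>x\<in>UNIV. inverse (x::'a) ^ k) = 0"
  using assms sum_UNIV_inverse[of "\<lambda>x::'a. x ^ k"] sum_power_finite_field[where 'a='a, of k]
  by (auto dest: dvd_imp_le)

lemma sum_power_mult_power_complement:
  assumes "b < CARD('a::{finite,field})" "1 \<le> a" "a < CARD('a)"
  shows "(\<Sum>x\<in>UNIV. (x::'a) ^ b * x ^ (CARD('a) - 1 - a)) = (if b = a then -1 else 0)"
proof -
  define n where "n = CARD('a) - 1"
  define k where "k = b + (n - a)"
  have "0 < k \<and> n dvd k \<longleftrightarrow> b = a"
  proof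
    assume "0 < k \<and> n dvd k"
    then obtain m where "k = n * m" "0 < m"
      by (auto elim!: dvdE)
    moreover have "k < n * 2"
      using assms by (simp add: k_def n_def)
    ultimately have "m = 1"
      by simp
    then show "b = a"
      using \<open>k = n * m\<close> assms by (simp add: k_def n_def)
  qed (use assms in \<open>auto simp: k_def n_def\<close>)
  then show ?thesis
    using sum_power_finite_field[where 'a='a, of k] by (simp add: k_def n_def flip: power_add)
qed

section \<open>Coefficients of reduced polynomials in three variables\<close>

lemma sum_product3:
  fixes f :: "'b \<Rightarrow> 'a::semiring_0"
  shows "sum f A * sum g B * sum h C = (\<Sum>x\<in>A. \<Sum>y\<in>B. \<Sum>z\<in>C. f x * g y * h z)"
proof -
  have "sum f A * sum g B * sum h C = (\<Sum>x\<in>A. \<Sum>y\<in>B. f x * g y) * sum h C"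
    by (simp only: sum_product)
  also have "\<dots> = (\<Sum>x\<in>A. \<Sum>y\<in>B. f x * g y * sum h C)"
    by (simp only: sum_distrib_right)
  finally show ?thesis
    by (simp only: sum_distrib_left)
qed

lemma coeff_eq_sum_eval3:
  fixes c :: "nat \<times> nat \<times> nat \<Rightarrow> 'a::{finite,field}"
  assumes "1 \<le> a" "a < CARD('a)" "1 \<le> b" "b < CARD('a)" "1 \<le> d" "d < CARD('a)"
  shows "c (a, b, d) = - (\<Sum>x1\<in>UNIV. \<Sum>x2\<in>UNIV. \<Sum>x3\<in>UNIV. eval3 c x1 x2 x3
           * x1 ^ (CARD('a) - 1 - a) * x2 ^ (CARD('a) - 1 - b) * x3 ^ (CARD('a) - 1 - d))"
proof -
  define S where "S = {0..<CARD('a)}"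
  define P where "P i j = (\<Sum>x\<in>UNIV. (x::'a) ^ i * x ^ (CARD('a) - 1 - j))" for i j
  have P: "P i j = (if i = j then -1 else 0)" if "i < CARD('a)" "1 \<le> j" "j < CARD('a)" for i j
    using sum_power_mult_power_complement[OF that] by (simp add: P_def)
  have "eval3 c x1 x2 x3 * x1 ^ (CARD('a) - 1 - a) * x2 ^ (CARD('a) - 1 - b) * x3 ^ (CARD('a) - 1 - d) =
      (\<Sum>(a', b', d')\<in>S \<times> S \<times> S. c (a', b', d') * (x1 ^ a' * x1 ^ (CARD('a) - 1 - a))
         * (x2 ^ b' * x2 ^ (CARD('a) - 1 - b)) * (x3 ^ d' * x3 ^ (CARD('a) - 1 - d)))" for x1 x2 x3
    unfolding eval3_def S_def sum_distrib_right by (intro sum.cong refl) (clarsimp simp: mult_ac)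
  then have "(\<Sum>x1\<in>UNIV. \<Sum>x2\<in>UNIV. \<Sum>x3\<in>UNIV. eval3 c x1 x2 x3
           * x1 ^ (CARD('a) - 1 - a) * x2 ^ (CARD('a) - 1 - b) * x3 ^ (CARD('a) - 1 - d)) =
      (\<Sum>(a', b', d')\<in>S \<times> S \<times> S. \<Sum>x1\<in>UNIV. \<Sum>x2\<in>UNIV. \<Sum>x3\<in>UNIV.
         c (a', b', d') * (x1 ^ a' * x1 ^ (CARD('a) - 1 - a))
         * (x2 ^ b' * x2 ^ (CARD('a) - 1 - b)) * (x3 ^ d' * x3 ^ (CARD('a) - 1 - d)))"
    by (simp only: sum.swap[of _ "S \<times> S \<times> S"] split_def)
  also have "\<dots> = (\<Sum>(a', b', d')\<in>S \<times> S \<times> S. c (a', b', d') * P a' a * P b' b * P d' d)"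
    unfolding P_def by (intro sum.cong refl) (clarsimp simp only: sum_product3[symmetric] sum_distrib_left)
  also have "\<dots> = (\<Sum>m\<in>S \<times> S \<times> S. if m = (a, b, d) then - c (a, b, d) else 0)"
    by (rule sum.cong[OF refl])
      (auto simp: S_def P[OF _ assms(1,2)] P[OF _ assms(3,4)] P[OF _ assms(5,6)] split: if_splits)
  also have "\<dots> = - c (a, b, d)"
    using assms by (simp add: S_def)
  finally show ?thesis
    by simp
qed

text \<open>The coefficients of \<open>1 - (x - y) ^ (q - 1)\<close>, the reduced polynomial of the indicator of \<open>y\<close>.\<close>
definition lagrange_coeff :: "'a::{finite,field} \<Rightarrow> nat \<Rightarrow> 'a" where
  "lagrange_coeff y i =
     (if i = 0 then 1 else 0) - of_nat ((CARD('a) - 1) choose i) * (- y) ^ (CARD('a) - 1 - i)"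

lemma sum_lagrange_coeff:
  "(\<Sum>i\<in>{0..<CARD('a)}. lagrange_coeff y i * x ^ i) = (of_bool (x = y) :: 'a::{finite,field})"
proof -
  define n where "n = CARD('a) - 1"
  have "n \<ge> 1" "{0..<CARD('a)} = {..n}"
    using card_field_ge_2[where 'a='a] by (auto simp: n_def)
  have "lagrange_coeff y i * x ^ i =
      (if i = 0 then 1 else 0) - of_nat (n choose i) * x ^ i * (- y) ^ (n - i)" for i
    by (cases "i = 0") (simp_all add: lagrange_coeff_def n_def algebra_simps)
  then have "(\<Sum>i\<in>{0..<CARD('a)}. lagrange_coeff y i * x ^ i) =
      1 - (\<Sum>i\<le>n. of_nat (n choose i) * x ^ i * (- y) ^ (n - i))"
    by (simp add: \<open>{0..<CARD('a)} = {..n}\<close> sum_subtractf)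
  also have "\<dots> = 1 - (x - y) ^ n"
    using binomial_ring[of x "- y" n] by simp
  also have "\<dots> = of_bool (x = y)"
    using \<open>n \<ge> 1\<close> power_card_minus_1[of "x - y"] card_field_ge_2[where 'a='a]
    by (simp add: n_def)
  finally show ?thesis .
qed

lemma ex_reduced3_eval3:
  fixes F :: "'a::{finite,field} \<Rightarrow> 'a \<Rightarrow> 'a \<Rightarrow> 'a"
  shows "\<exists>c. reduced3 c \<and> (\<forall>x1 x2 x3. eval3 c x1 x2 x3 = F x1 x2 x3)"
proof -
  define S where "S = {0..<CARD('a)}"
  define c where "c = (\<lambda>(i, j, k). if i < CARD('a) \<and> j < CARD('a) \<and> k < CARD('a) then
      (\<Sum>y1\<in>UNIV. \<Sum>y2\<in>UNIV. \<Sum>y3\<in>UNIV.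
         F y1 y2 y3 * lagrange_coeff y1 i * lagrange_coeff y2 j * lagrange_coeff y3 k)
    else 0)"
  have delta: "(\<Sum>y\<in>UNIV. G y * of_bool (x = y)) = G x" for G :: "'a \<Rightarrow> 'a" and x
    by simp
  have "eval3 c x1 x2 x3 = F x1 x2 x3" for x1 x2 x3
  proof -
    have "eval3 c x1 x2 x3 = (\<Sum>i\<in>S. \<Sum>j\<in>S. \<Sum>k\<in>S. \<Sum>y1\<in>UNIV. \<Sum>y2\<in>UNIV. \<Sum>y3\<in>UNIV.
        F y1 y2 y3 * (lagrange_coeff y1 i * x1 ^ i) * (lagrange_coeff y2 j * x2 ^ j)
          * (lagrange_coeff y3 k * x3 ^ k))"
      unfolding eval3_def S_def sum.cartesian_product[symmetric]
      by (intro sum.cong refl) (simp add: c_def sum_distrib_left sum_distrib_right mult_ac)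
    also have "\<dots> = (\<Sum>y1\<in>UNIV. \<Sum>y2\<in>UNIV. \<Sum>y3\<in>UNIV. F y1 y2 y3
        * (\<Sum>i\<in>S. lagrange_coeff y1 i * x1 ^ i) * (\<Sum>j\<in>S. lagrange_coeff y2 j * x2 ^ j)
        * (\<Sum>k\<in>S. lagrange_coeff y3 k * x3 ^ k))"
      by (simp only: sum.swap[of _ "UNIV :: 'a set" S] sum_product3[symmetric] sum_distrib_left)
    also have "\<dots> = F x1 x2 x3"
      by (simp only: S_def sum_lagrange_coeff delta)
    finally show ?thesis .
  qed
  moreover have "reduced3 c"
    by (auto simp: reduced3_def c_def)
  ultimately show ?thesis
    by blast
qed

lemma totdeg3_eqI:
  assumes "c (a, b, d) \<noteq> 0" "a + b + d = n" "\<And>a b d. c (a, b, d) \<noteq> 0 \<Longrightarrow> a + b + d \<le> n"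
  shows "totdeg3 c = n"
proof -
  have "{a + b + d | a b d. c (a, b, d) \<noteq> 0} \<subseteq> {..n}"
    using assms(3) by auto
  then have "finite {a + b + d | a b d. c (a, b, d) \<noteq> 0}"
    by (rule finite_subset) simp
  then show ?thesis
    unfolding totdeg3_def using assms by (intro Max_eqI) auto
qed

section \<open>Character sums of \<open>f3\<close>\<close>

lemma tfun_eq: "tfun (y::'a::{finite,field}) = y + (if y = 0 then 1 else 0) - (if y = 1 then 1 else 0)"
proof -
  define n where "n = CARD('a) - 1"
  have "n \<ge> 1" "{0..CARD('a) - 2} = {..<n}"
    using card_field_ge_2[where 'a='a] by (auto simp: n_def)
  then have "tfun y = y + (\<Sum>k<n. y ^ k)"
    by (simp add: tfun_def)
  moreover have "(\<Sum>k<n. y ^ k) = (if y = 0 then 1 else 0) - (if y = 1 then 1 else 0)"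
  proof (cases "y = 1")
    case True
    then show ?thesis
      using of_nat_card_field[where 'a='a] card_field_ge_2[where 'a='a] by (simp add: n_def of_nat_diff)
  next
    case False
    then show ?thesis
      using \<open>n \<ge> 1\<close> power_card_minus_1[of y] card_field_ge_2[where 'a='a]
      by (simp add: sum_gp_strict n_def)
  qed
  ultimately show ?thesis
    by simp
qed

lemma sum_tfun_add_mult:
  fixes T :: "'a::{finite,field}"
  shows "(\<Sum>u\<in>UNIV. tfun (T + u) * h u) = (\<Sum>u\<in>UNIV. (T + u) * h u) + h (- T) - h (1 - T)"
proof -
  have "tfun (T + u) * h u = (T + u) * h u + (if u = - T then h (- T) else 0)
      - (if u = 1 - T then h (1 - T) else 0)" for u
  proof -
    consider "u = - T" | "u = 1 - T" | "u \<noteq> - T" "u \<noteq> 1 - T"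
      by blast
    then show ?thesis
    proof cases
      case 3
      then have "T + u \<noteq> 0" "T + u \<noteq> 1"
        by (metis add_diff_cancel_left' add_eq_0_iff)+
      with 3 show ?thesis
        by (simp add: tfun_eq)
    qed (simp_all add: tfun_eq)
  qed
  then show ?thesis
    by (simp add: sum.distrib sum_subtractf)
qed

definition f2 :: "'a::{finite,field} \<Rightarrow> 'a \<Rightarrow> 'a" where
  "f2 x1 x2 = tfun (x1 ^ (CARD('a) - 2) + x2 ^ (CARD('a) - 2))"

definition f3 :: "'a::{finite,field} \<Rightarrow> 'a \<Rightarrow> 'a \<Rightarrow> 'a" where
  "f3 x1 x2 x3 = tfun (f2 x1 x2 + x3 ^ (CARD('a) - 2))"

definition f3_moment :: "nat \<Rightarrow> nat \<Rightarrow> nat \<Rightarrow> 'a::{finite,field}" where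
  "f3_moment e1 e2 e3 =
     (\<Sum>x1\<in>UNIV. \<Sum>x2\<in>UNIV. \<Sum>x3\<in>UNIV. f3 x1 x2 x3 * x1 ^ e1 * x2 ^ e2 * x3 ^ e3)"

text \<open>The contribution of the two points \<open>u = - t s\<close> and \<open>u = 1 - t s\<close> when
  \<open>sum_tfun_add_mult\<close> is applied with \<open>T = t s\<close> and \<open>h u = inverse u ^ e\<close>.\<close>
definition swap_correction :: "nat \<Rightarrow> 'a::{finite,field} \<Rightarrow> 'a" where
  "swap_correction e s = inverse (- tfun s) ^ e - inverse (1 - tfun s) ^ e"

lemma coeff_eq_f3_moment:
  fixes c :: "nat \<times> nat \<times> nat \<Rightarrow> 'a::{finite,field}"
  assumes "\<forall>x1 x2 x3. eval3 c x1 x2 x3 = f3 x1 x2 x3"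
    and "1 \<le> a" "a < CARD('a)" "1 \<le> b" "b < CARD('a)" "1 \<le> d" "d < CARD('a)"
  shows "c (a, b, d) = - f3_moment (CARD('a) - 1 - a) (CARD('a) - 1 - b) (CARD('a) - 1 - d)"
  using coeff_eq_sum_eval3[of a b d c] assms by (simp add: f3_moment_def)

lemma sum3_UNIV_inverse:
  fixes K :: "'a::division_ring \<Rightarrow> 'a \<Rightarrow> 'a \<Rightarrow> 'b::comm_monoid_add"
  shows "(\<Sum>x1\<in>UNIV. \<Sum>x2\<in>UNIV. \<Sum>x3\<in>UNIV. K (inverse x1) (inverse x2) (inverse x3)) =
   (\<Sum>u1\<in>UNIV. \<Sum>u2\<in>UNIV. \<Sum>u3\<in>UNIV. K u1 u2 u3)"
proof -
  have "(\<Sum>x3\<in>UNIV. K v w (inverse x3)) = (\<Sum>u3\<in>UNIV. K v w u3)" for v w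
    by (rule sum_UNIV_inverse)
  moreover have "(\<Sum>x2\<in>UNIV. \<Sum>u3\<in>UNIV. K v (inverse x2) u3) = (\<Sum>u2\<in>UNIV. \<Sum>u3\<in>UNIV. K v u2 u3)" for v
    by (rule sum_UNIV_inverse[of "\<lambda>w. \<Sum>u3\<in>UNIV. K v w u3"])
  moreover have "(\<Sum>x1\<in>UNIV. \<Sum>u2\<in>UNIV. \<Sum>u3\<in>UNIV. K (inverse x1) u2 u3) =
      (\<Sum>u1\<in>UNIV. \<Sum>u2\<in>UNIV. \<Sum>u3\<in>UNIV. K u1 u2 u3)"
    by (rule sum_UNIV_inverse[of "\<lambda>v. \<Sum>u2\<in>UNIV. \<Sum>u3\<in>UNIV. K v u2 u3"])
  ultimately show ?thesis
    by simp
qed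

lemma f3_moment_eq:
  assumes "CARD('a::{finite,field}) \<ge> 3" "e2 < CARD('a) - 1" "e3 < CARD('a) - 1"
  shows "(f3_moment e1 e2 e3 :: 'a) =
    (\<Sum>u1\<in>UNIV. \<Sum>u2\<in>UNIV. inverse u1 ^ e1 * inverse u2 ^ e2 * swap_correction e3 (u1 + u2))"
proof -
  define C :: 'a where "C = (\<Sum>u\<in>UNIV. u * inverse u ^ e3)"
  have inner: "(\<Sum>u3\<in>UNIV. tfun (T + u3) * inverse u3 ^ e3) =
      C + (inverse (- T) ^ e3 - inverse (1 - T) ^ e3)" for T :: 'a
    using sum_inverse_power[OF assms(3)]
    by (simp add: sum_tfun_add_mult C_def distrib_right sum.distrib mult.assoc flip: sum_distrib_left)
  have "(f3_moment e1 e2 e3 :: 'a) = (\<Sum>u1\<in>UNIV. \<Sum>u2\<in>UNIV. \<Sum>u3\<in>UNIV.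
      inverse u1 ^ e1 * inverse u2 ^ e2 * (tfun (tfun (u1 + u2) + u3) * inverse u3 ^ e3))"
    unfolding f3_moment_def f3_def f2_def power_card_minus_2[OF assms(1)]
    using sum3_UNIV_inverse[of "\<lambda>u1 u2 u3. inverse u1 ^ e1 * inverse u2 ^ e2
        * (tfun (tfun (u1 + u2) + u3) * inverse u3 ^ e3)"]
    by (simp add: mult_ac)
  also have "\<dots> = (\<Sum>u1\<in>UNIV. \<Sum>u2\<in>UNIV. inverse u1 ^ e1 * inverse u2 ^ e2 * C)
      + (\<Sum>u1\<in>UNIV. \<Sum>u2\<in>UNIV. inverse u1 ^ e1 * inverse u2 ^ e2
           * (inverse (- tfun (u1 + u2)) ^ e3 - inverse (1 - tfun (u1 + u2)) ^ e3))"
    by (simp only: inner sum_distrib_left[symmetric] distrib_left sum.distrib)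
  also have "(\<Sum>u1\<in>UNIV. \<Sum>u2\<in>UNIV. inverse u1 ^ e1 * inverse u2 ^ e2 * C) = 0"
    using sum_inverse_power[OF assms(2)]
    by (simp add: mult.assoc flip: sum_distrib_left sum_distrib_right)
  finally show ?thesis
    by (simp add: swap_correction_def)
qed

lemma sum_inverse_power_mult_add_eq_0:
  assumes "k < CARD('a::{finite,field}) - 1"
  shows "(\<Sum>u\<in>UNIV. \<Sum>v\<in>UNIV. inverse (u::'a) ^ k * G (u + v)) = 0"
proof -
  have "(\<Sum>u\<in>UNIV. \<Sum>v\<in>UNIV. inverse (u::'a) ^ k * G (u + v)) =
      (\<Sum>u\<in>UNIV. inverse u ^ k) * (\<Sum>v\<in>UNIV. G v)"
    by (simp add: sum_UNIV_add sum_product flip: sum_distrib_left)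
  then show ?thesis
    using sum_inverse_power[OF assms] by simp
qed

lemma f3_moment_eq_0:
  assumes "CARD('a::{finite,field}) \<ge> 3"
    and "e1 < CARD('a) - 1" "e2 < CARD('a) - 1" "e3 < CARD('a) - 1"
    and "e1 = 0 \<or> e2 = 0 \<or> e3 = 0"
  shows "(f3_moment e1 e2 e3 :: 'a) = 0"
proof -
  have "(f3_moment e1 e2 e3 :: 'a) =
      (\<Sum>u1\<in>UNIV. \<Sum>u2\<in>UNIV. inverse u1 ^ e1 * inverse u2 ^ e2 * swap_correction e3 (u1 + u2))"
    by (rule f3_moment_eq[OF assms(1,3,4)])
  also have "\<dots> = 0"
    using assms(5)
  proof (elim disjE)
    assume "e1 = 0"
    then show ?thesis
      using sum_inverse_power_mult_add_eq_0[OF assms(3), of "swap_correction e3"]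
      by (subst sum.swap) (simp add: add.commute)
  next
    assume "e2 = 0"
    then show ?thesis
      using sum_inverse_power_mult_add_eq_0[OF assms(2), of "swap_correction e3"] by simp
  qed (simp add: swap_correction_def)
  finally show ?thesis .
qed

lemma sum_inverse_mult_inverse_diff:
  assumes "CARD('a::{finite,field}) \<ge> 4"
  shows "(\<Sum>u\<in>UNIV. inverse u * inverse (s - u)) = - 2 * inverse (s::'a) ^ 2"
proof (cases "s = 0")
  case True
  then show ?thesis
    using sum_inverse_power[where 'a='a, of 2] assms by (simp add: sum_negf power2_eq_square)
next
  case False
  have partial_fractions: "inverse u * inverse (s - u) =
      inverse s * inverse u + inverse s * inverse (s - u)
      - (if u = 0 then inverse s ^ 2 else 0) - (if u = s then inverse s ^ 2 else 0)" for u :: 'a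
    using False by (cases "u = 0 \<or> u = s") (auto simp: field_simps power2_eq_square)
  have "(\<Sum>u\<in>UNIV. inverse (s - u)) = (\<Sum>u\<in>UNIV. inverse (u::'a))"
    by (rule sum_UNIV_diff)
  moreover have "(\<Sum>u\<in>UNIV. inverse (u::'a)) = 0"
    using sum_inverse_power[where 'a='a, of 1] assms by simp
  ultimately show ?thesis
    by (simp add: partial_fractions sum_subtractf sum.distrib flip: sum_distrib_left)
qed

lemma sum_swap_correction_mult_inverse_square:
  assumes "CARD('a::{finite,field}) \<ge> 5"
  shows "(\<Sum>s\<in>UNIV. swap_correction 1 s * inverse (s::'a) ^ 2) = 3"
proof -
  have partial_fractions: "swap_correction 1 s * inverse s ^ 2 =
      - (inverse s ^ 3) - inverse s ^ 2 - inverse s - inverse (1 - s)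
      + (if s = 0 then 1 else 0) + (if s = 1 then 2 else 0)" for s :: 'a
  proof -
    consider "s = 0" | "s = 1" | "s \<noteq> 0" "s \<noteq> 1"
      by blast
    then show ?thesis
    proof cases
      case 3
      then have "1 - s \<noteq> 0"
        by simp
      with 3 show ?thesis
        by (simp add: swap_correction_def tfun_eq field_simps)
          (simp add: algebra_simps eval_nat_numeral)
    qed (simp_all add: swap_correction_def tfun_eq)
  qed
  have "(\<Sum>s\<in>UNIV. inverse (s::'a) ^ k) = 0" if "k \<le> 3" for k
    using sum_inverse_power[where 'a='a, of k] assms that by simp
  from this[of 1] this[of 2] this[of 3]
  have "(\<Sum>s\<in>UNIV. inverse (s::'a)) = 0" "(\<Sum>s\<in>UNIV. inverse (s::'a) ^ 2) = 0"
    "(\<Sum>s\<in>UNIV. inverse (s::'a) ^ 3) = 0"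
    by simp_all
  moreover have "(\<Sum>s\<in>UNIV. inverse (1 - s)) = (\<Sum>s\<in>UNIV. inverse (s::'a))"
    by (rule sum_UNIV_diff)
  ultimately show ?thesis
    by (simp only: partial_fractions) (simp add: sum_subtractf sum.distrib sum_negf)
qed

lemma f3_moment_1_1_1:
  assumes "CARD('a::{finite,field}) \<ge> 5"
  shows "(f3_moment 1 1 1 :: 'a) = - 6"
proof -
  define G :: "'a \<Rightarrow> 'a" where "G = swap_correction 1"
  have "(f3_moment 1 1 1 :: 'a) = (\<Sum>u1\<in>UNIV. \<Sum>u2\<in>UNIV. inverse u1 * inverse u2 * G (u1 + u2))"
    using f3_moment_eq[where 'a='a, of 1 1 1] assms by (simp add: G_def)
  also have "\<dots> = (\<Sum>u1\<in>UNIV. \<Sum>s\<in>UNIV. inverse u1 * inverse (s - u1) * G s)"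
    using sum_UNIV_add[of "\<lambda>s. inverse u1 * inverse (s - u1) * G s" u1 for u1] by simp
  also have "\<dots> = (\<Sum>s\<in>UNIV. (\<Sum>u1\<in>UNIV. inverse u1 * inverse (s - u1)) * G s)"
    by (subst sum.swap) (simp add: sum_distrib_right)
  also have "\<dots> = (\<Sum>s\<in>UNIV. - 2 * (G s * inverse s ^ 2))"
    using assms by (simp only: sum_inverse_mult_inverse_diff) (simp add: mult_ac)
  also have "\<dots> = - 2 * (\<Sum>s\<in>UNIV. G s * inverse s ^ 2)"
    by (rule sum_distrib_left[symmetric])
  also have "\<dots> = - 6"
    using sum_swap_correction_mult_inverse_square[OF assms] by (simp add: G_def)
  finally show ?thesis .
qed

lemma totdeg3_f3:
  fixes c :: "nat \<times> nat \<times> nat \<Rightarrow> 'a::{finite,field}"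
  assumes "CARD('a) \<ge> 5" "(6::'a) \<noteq> 0"
    and "reduced3 c" "\<forall>x1 x2 x3. eval3 c x1 x2 x3 = f3 x1 x2 x3"
  shows "totdeg3 c = 3 * (CARD('a) - 2)"
proof (rule totdeg3_eqI)
  let ?m = "CARD('a) - 2"
  have "c (?m, ?m, ?m) = - f3_moment 1 1 1"
    using coeff_eq_f3_moment[OF assms(4), of ?m ?m ?m] assms(1) by (simp add: numeral_eq_Suc)
  then show "c (?m, ?m, ?m) \<noteq> 0"
    using f3_moment_1_1_1[OF assms(1)] assms(2) by simp
  show "?m + ?m + ?m = 3 * ?m"
    by simp
next
  fix a b d
  assume nonzero: "c (a, b, d) \<noteq> 0"
  then have bounds: "a < CARD('a)" "b < CARD('a)" "d < CARD('a)"
    using assms(3) by (auto simp: reduced3_def)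
  show "a + b + d \<le> 3 * (CARD('a) - 2)"
  proof (rule ccontr)
    assume above: "\<not> ?thesis"
    define e1 e2 e3 where "e1 = CARD('a) - 1 - a" and "e2 = CARD('a) - 1 - b" and "e3 = CARD('a) - 1 - d"
    have "e1 + e2 + e3 \<le> 2"
      using above bounds by (simp add: e1_def e2_def e3_def)
    then have "(f3_moment e1 e2 e3 :: 'a) = 0"
      using assms(1) by (intro f3_moment_eq_0) auto
    moreover have "c (a, b, d) = - f3_moment e1 e2 e3"
      unfolding e1_def e2_def e3_def
      using above bounds assms(1) by (intro coeff_eq_f3_moment[OF assms(4)]) auto
    ultimately show False
      using nonzero by simp
  qed
qed

lemma CHAR_finite_field:
  assumes "prime p" "CARD('a::{finite,field}) = p ^ r"
  shows "CHAR('a) = p"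
proof -
  have "prime CHAR('a)"
    by (intro prime_CHAR_semidom finite_imp_CHAR_pos) simp
  moreover have "CHAR('a) dvd p ^ r"
    using CHAR_dvd_CARD[where 'a='a] assms(2) by simp
  ultimately show ?thesis
    using assms(1) by (meson prime_dvd_power primes_dvd_imp_eq)
qed

lemma card_ge_5_and_six_nonzero:
  assumes "prime p" "p \<noteq> 2" "p \<noteq> 3" "CARD('a::{finite,field}) = p ^ r"
  shows "CARD('a) \<ge> 5" "(6::'a) \<noteq> 0"
proof -
  have "\<not> 2 dvd p" "\<not> 3 dvd p"
    using assms(1-3) primes_dvd_imp_eq[of 2 p] primes_dvd_imp_eq[of 3 p] by auto
  then have "p \<ge> 5"
    using prime_ge_2_nat[OF assms(1)] by presburger
  moreover have "CHAR('a) = p"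
    using CHAR_finite_field[OF assms(1,4)] .
  ultimately show "CARD('a) \<ge> 5"
    using CHAR_dvd_CARD[where 'a='a] by (auto dest: dvd_imp_le)
  have "\<not> p dvd 6"
    using \<open>p \<ge> 5\<close> prime_dvd_mult_iff[OF assms(1), of 2 3] by (auto dest: dvd_imp_le)
  then show "(6::'a) \<noteq> 0"
    using of_nat_eq_0_iff_char_dvd[where 'a='a, of 6] \<open>CHAR('a) = p\<close> by simp
qed

theorem mainTheorem15:
  fixes p r :: nat
  assumes "prime p" "p \<noteq> 2" "p \<noteq> 3" "CARD('a::{finite,field}) = p ^ r"
  shows "(\<exists>c :: nat \<times> nat \<times> nat \<Rightarrow> 'a. reduced3 c \<and>
            (\<forall>x1 x2 x3. eval3 c x1 x2 x3 =
               tfun (tfun (x1 ^ (CARD('a) - 2) + x2 ^ (CARD('a) - 2)) + x3 ^ (CARD('a) - 2))))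
       \<and> (\<forall>c :: nat \<times> nat \<times> nat \<Rightarrow> 'a. reduced3 c \<and>
            (\<forall>x1 x2 x3. eval3 c x1 x2 x3 =
               tfun (tfun (x1 ^ (CARD('a) - 2) + x2 ^ (CARD('a) - 2)) + x3 ^ (CARD('a) - 2)))
            \<longrightarrow> totdeg3 c = 3 * (CARD('a) - 2))"
  using ex_reduced3_eval3[of f3] totdeg3_f3[OF card_ge_5_and_six_nonzero[OF assms]]
  by (simp add: f3_def f2_def)

end
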